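(* Let $m \ge 2$, $n\ge 2$, and for $1 \le i \le m$ let $f_i(x) = x^T A_i x + c_i^T x + d_i$ be quadratics on $\mathbb{R}^n$ with $A_i$ symmetric, where $f_1(x) = \|x\|^2 - 1$ (i.e. $A_1 = I$, $c_1 = 0$, $d_1 = -1$). For $2 \le i \le m$ let $U_i > 0$ satisfy $|f_i(x)| \le U_i$ for all $x$ with $\|x\|^2 \le 2$. Consider the system in the real variables $v_0, x_1,\ldots,x_n, s_1,\ldots,s_m, w_2,\ldots,w_m$: $$(\mathrm{a})\quad x^T A_i x + c_i^T v_0 x + d_i v_0^2 + s_i^2 = 0, \quad 1 \le i \le m,$$ $$(\mathrm{b})\quad \frac{s_i^2 + w_i^2}{U_i} - v_0^2 = 0, \quad 2 \le i \le m,$$ $$(\mathrm{c})\quad \|x\|^2 + s_1^2 + \sum_{i=2}^m \frac{s_i^2 + w_i^2}{U_i} + v_0^2 = m+1.$$ Let $0 \le \delta < 1$ and suppose $\hat z = (\hat v_0, \hat x, \hat s, \hat w)$ is $\delta$-feasible for the equations (a) and (b). Then (i) $$m\hat v_0^2 - m\delta \le \|\hat x\|^2 + \hat s_1^2 + \sum_{i=2}^m \frac{\hat s_i^2 + \hat w_i^2}{U_i} \le m \hat v_0^2 + m\delta;$$ (ii) if $\hat z$ is also $\delta$-feasible for (c), then $1 - \delta \le \hat v_0^2 \le 1 + \delta$.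
   Context: A vector is $\delta$-feasible for an equation $h = 0$ if $|h| \le \delta$ at that vector (i.e. it is $\delta$-feasible for both inequalities $h \le 0$ and $-h \le 0$). *)

theory Defs
  imports "HOL-Analysis.Analysis"
begin

definition delta_feasible_eq :: "real \<Rightarrow> real \<Rightarrow> bool" where
  "delta_feasible_eq \<delta> h \<longleftrightarrow> \<bar>h\<bar> \<le> \<delta>"

definition quad :: "real^'n^'n \<Rightarrow> real^'n \<Rightarrow> real \<Rightarrow> real^'n \<Rightarrow> real" where
  "quad A c d x = x \<bullet> (A *v x) + c \<bullet> x + d"

end

theory Submission
  imports Defs
begin

text \<open>Only equation (a) for the unit-sphere quadratic \<open>f\<^sub>1\<close> and the equations (b) are
  used: each of the \<open>m\<close> summands of the left side of (c) other than \<open>v\<^sub>0\<^sup>2\<close> is within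
  \<open>\<delta>\<close> of \<open>v\<^sub>0\<^sup>2\<close>, which gives (i). Subtracting (i) from (c) then leaves
  \<open>(m + 1) (v\<^sub>0\<^sup>2 - 1)\<close> bounded by \<open>(m + 1) \<delta>\<close>, which is (ii).\<close>

lemma abs_sum_diff_card_le:
  fixes a :: "'a \<Rightarrow> real"
  assumes "\<forall>i\<in>I. \<bar>a i - b\<bar> \<le> \<delta>"
  shows "\<bar>sum a I - real (card I) * b\<bar> \<le> real (card I) * \<delta>"
proof -
  have "\<bar>sum a I - real (card I) * b\<bar> = \<bar>\<Sum>i\<in>I. a i - b\<bar>"
    by (simp add: sum_subtractf)
  also have "\<dots> \<le> (\<Sum>i\<in>I. \<bar>a i - b\<bar>)"
    by (rule sum_abs)
  also have "\<dots> \<le> (\<Sum>i\<in>I. \<delta>)"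
    using assms by (intro sum_mono) auto
  finally show ?thesis
    by simp
qed

lemma abs_sub_one_le_of_balanced:
  fixes k :: nat and T v \<delta> :: real
  assumes "\<bar>T - real k * v\<bar> \<le> real k * \<delta>"
    and "\<bar>T + v - (real k + 1)\<bar> \<le> \<delta>"
  shows "\<bar>v - 1\<bar> \<le> \<delta>"
proof -
  have "(real k + 1) * \<bar>v - 1\<bar> = \<bar>(real k + 1) * (v - 1)\<bar>"
    by (simp add: abs_mult)
  also have "\<dots> = \<bar>(T + v - (real k + 1)) - (T - real k * v)\<bar>"
    by (simp add: algebra_simps)
  also have "\<dots> \<le> (real k + 1) * \<delta>"
    using assms by (simp add: abs_le_iff algebra_simps)
  finally show ?thesis
    by (simp add: mult_le_cancel_left_pos add_pos_nonneg)
qed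

lemma sphere_equation_residual:
  fixes x :: "real^'n"
  shows "x \<bullet> (mat 1 *v x) + v0 * ((0::real^'n) \<bullet> x) + (-1) * v0 ^ 2 + s1 ^ 2
           = (norm x ^ 2 + s1 ^ 2) - v0 ^ 2"
  by (simp add: power2_norm_eq_inner)

theorem lemma1:
  fixes m :: nat
    and A :: "nat \<Rightarrow> real^'n^'n" and c :: "nat \<Rightarrow> real^'n" and d :: "nat \<Rightarrow> real"
    and U :: "nat \<Rightarrow> real"
    and \<delta> :: real
    and v0 :: real and x :: "real^'n" and s :: "nat \<Rightarrow> real" and w :: "nat \<Rightarrow> real"
  assumes hm: "m \<ge> 2"
    and hn: "CARD('n) \<ge> 2"
    and hsym: "\<forall>i\<in>{1..m}. transpose (A i) = A i"
    and hA1: "A 1 = mat 1" and hc1: "c 1 = 0" and hd1: "d 1 = -1"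
    and hU: "\<forall>i\<in>{2..m}. U i > 0"
    and hUbound: "\<forall>i\<in>{2..m}. \<forall>y::real^'n. norm y ^ 2 \<le> 2 \<longrightarrow> \<bar>quad (A i) (c i) (d i) y\<bar> \<le> U i"
    and hdelta: "0 \<le> \<delta>" "\<delta> < 1"
    and feas_a: "\<forall>i\<in>{1..m}. delta_feasible_eq \<delta>
                   (x \<bullet> (A i *v x) + v0 * (c i \<bullet> x) + d i * v0 ^ 2 + s i ^ 2)"
    and feas_b: "\<forall>i\<in>{2..m}. delta_feasible_eq \<delta> ((s i ^ 2 + w i ^ 2) / U i - v0 ^ 2)"
  shows "real m * v0 ^ 2 - real m * \<delta>
           \<le> norm x ^ 2 + s 1 ^ 2 + (\<Sum>i=2..m. (s i ^ 2 + w i ^ 2) / U i)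
         \<and> norm x ^ 2 + s 1 ^ 2 + (\<Sum>i=2..m. (s i ^ 2 + w i ^ 2) / U i)
           \<le> real m * v0 ^ 2 + real m * \<delta>
         \<and> (delta_feasible_eq \<delta>
               (norm x ^ 2 + s 1 ^ 2 + (\<Sum>i=2..m. (s i ^ 2 + w i ^ 2) / U i) + v0 ^ 2 - (real m + 1))
            \<longrightarrow> 1 - \<delta> \<le> v0 ^ 2 \<and> v0 ^ 2 \<le> 1 + \<delta>)"
proof -
  define S where "S = (\<Sum>i=2..m. (s i ^ 2 + w i ^ 2) / U i)"
  have "delta_feasible_eq \<delta> (x \<bullet> (A 1 *v x) + v0 * (c 1 \<bullet> x) + d 1 * v0 ^ 2 + s 1 ^ 2)"
    using feas_a hm by simp
  then have sphere: "\<bar>(norm x ^ 2 + s 1 ^ 2) - v0 ^ 2\<bar> \<le> \<delta>"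
    unfolding hA1 hc1 hd1 sphere_equation_residual delta_feasible_eq_def .
  have "\<bar>S - real (card {2..m}) * v0 ^ 2\<bar> \<le> real (card {2..m}) * \<delta>"
    unfolding S_def
    using feas_b by (intro abs_sum_diff_card_le) (auto simp: delta_feasible_eq_def)
  moreover have "real (card {2..m}) = real m - 1"
    using hm by simp
  ultimately have summands: "\<bar>S - (real m - 1) * v0 ^ 2\<bar> \<le> (real m - 1) * \<delta>"
    by simp
  have part_i: "\<bar>(norm x ^ 2 + s 1 ^ 2 + S) - real m * v0 ^ 2\<bar> \<le> real m * \<delta>"
    using sphere summands unfolding abs_le_iff left_diff_distrib by linarith
  have part_ii: "\<bar>v0 ^ 2 - 1\<bar> \<le> \<delta>"
    if "\<bar>norm x ^ 2 + s 1 ^ 2 + S + v0 ^ 2 - (real m + 1)\<bar> \<le> \<delta>"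
    using part_i that by (rule abs_sub_one_le_of_balanced)
  show ?thesis
    using part_i part_ii unfolding S_def [symmetric] delta_feasible_eq_def
    by (auto simp: abs_le_iff)
qed

end
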